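(* Assume $\frac32<\gamma<2$ and $\Delta t=\Delta x=h$. There exists a constant $C>0$, depending only on $L,T,\mu,a,\gamma,\varrho_0,u_0$ and not on $h$ or the choice of numerical solution, such that for every numerical solution and every $m=1,\dots,M$, $$|E_1^m|\le C\,h^{\frac{2\gamma-3}{2\gamma}},$$ where $$E_1^m:=-\Delta t\,\Delta x\sum_{k=1}^m\sum_{i=0}^{N-2}\operatorname{Up}(\varrho^ku^k)_{i+1/2}\Big(\frac{\varrho_i^k\widehat u_i^k+\varrho_{i+1}^k\widehat u_{i+1}^k}{2}-\frac{\varrho_i^{k-1}\widehat u_i^{k-1}+\varrho_{i+1}^{k-1}\widehat u_{i+1}^{k-1}}{2}\Big).$$
   Context: Fix $L>0$, $\mu>0$, $a>0$, $p(\varrho)=a\varrho^\gamma$, $T>0$, integers $N,M\ge1$, $\Delta x=L/N<1$, $\Delta t=T/M<1$. Nodes $x_{i-1/2}=i\Delta x$ ($i=0,\dots,N$). Unknowns $\varrho_i^k$ ($i=0,\dots,N-1$), $u^k_{i-1/2}$ ($i=0,\dots,N$), $k=0,\dots,M$, with $u^k_{-1/2}=u^k_{N-1/2}=0$ for $k\ge1$. Notation: $z^+=\max\{z,0\}$, $z^-=\min\{z,0\}$; $\widehat u_i=\frac{u_{i-1/2}+u_{i+1/2}}2$; for $i=0,\dots,N-2$, $\operatorname{Up}(\varrho u)_{i+1/2}=\varrho_iu^+_{i+1/2}+\varrho_{i+1}u^-_{i+1/2}$, $\operatorname{Up}(\varrho\widehat uu)_{i+1/2}=\varrho_i\widehat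 u_iu^+_{i+1/2}+\varrho_{i+1}\widehat u_{i+1}u^-_{i+1/2}$, both fluxes vanishing at nodes $-1/2$, $N-1/2$; $\partial_{i+1/2}f=(f_{i+1}-f_i)/\Delta x$, $\partial_iv=(v_{i+1/2}-v_{i-1/2})/\Delta x$, $\Delta_{i+1/2}u=(u_{i-1/2}-2u_{i+1/2}+u_{i+3/2})/\Delta x^2$, $\partial_t^kf=(f^k-f^{k-1})/\Delta t$. Initial data $\varrho_0\in L^\gamma(0,L)$, $\varrho_0>0$, $u_0$ bounded on $[0,L]$; $\varrho_i^0=\frac1{\Delta x}\int_{x_{i-1/2}}^{x_{i+1/2}}\varrho_0$, $u^0_{i-1/2}=u_0(x_{i-1/2})$. Scheme for $k=1,\dots,M$: $\partial_t^k\varrho_i+\partial_i\operatorname{Up}(\varrho^ku^k)=0$ ($i=0,\dots,N-1$); $\partial_t^k\big(\frac{\varrho_i\widehat u_i+\varrho_{i+1}\widehat u_{i+1}}2\big)+\frac{\operatorname{Up}(\varrho^k\widehat u^ku^k)_{i+3/2}-\operatorname{Up}(\varrho^k\widehat u^ku^k)_{i-1/2}}{2\Delta x}=\mu\Delta_{i+1/2}u^k-\partial_{i+1/2}p(\varrho^k)$ ($i=0,\dots,N-2$). A numerical solution is any solution of this system (its densities are positive). *)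

theory Defs
  imports "HOL-Analysis.Analysis"
begin

text \<open>Discretization conventions.
  Densities: rho k i = rho_i^k (cells i = 0..N-1).
  Velocities: u k j = u^k_{j-1/2} (nodes j = 0..N), i.e. node x_{j-1/2} = j * dx.\<close>

definition ppart :: "real \<Rightarrow> real" where "ppart z = max z 0"
definition npart :: "real \<Rightarrow> real" where "npart z = min z 0"

definition pressure :: "real \<Rightarrow> real \<Rightarrow> real \<Rightarrow> real" where
  "pressure a gam r = a * r powr gam"

definition uhat :: "(nat \<Rightarrow> nat \<Rightarrow> real) \<Rightarrow> nat \<Rightarrow> nat \<Rightarrow> real" where
  "uhat u k i = (u k i + u k (Suc i)) / 2"

text \<open>Upwind mass flux at node j (position x_{j-1/2}); for j = i+1 it is Up(rho u)_{i+1/2};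
  it vanishes at the boundary nodes j = 0 and j = N.\<close>
definition UpM :: "nat \<Rightarrow> (nat \<Rightarrow> nat \<Rightarrow> real) \<Rightarrow> (nat \<Rightarrow> nat \<Rightarrow> real) \<Rightarrow> nat \<Rightarrow> nat \<Rightarrow> real" where
  "UpM N rho u k j =
     (if 1 \<le> j \<and> j \<le> N - 1
      then rho k (j - 1) * ppart (u k j) + rho k j * npart (u k j) else 0)"

definition UpQ :: "nat \<Rightarrow> (nat \<Rightarrow> nat \<Rightarrow> real) \<Rightarrow> (nat \<Rightarrow> nat \<Rightarrow> real) \<Rightarrow> nat \<Rightarrow> nat \<Rightarrow> real" where
  "UpQ N rho u k j =
     (if 1 \<le> j \<and> j \<le> N - 1
      then rho k (j - 1) * uhat u k (j - 1) * ppart (u k j) + rho k j * uhat u k j * npart (u k j)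
      else 0)"

definition qmom :: "(nat \<Rightarrow> nat \<Rightarrow> real) \<Rightarrow> (nat \<Rightarrow> nat \<Rightarrow> real) \<Rightarrow> nat \<Rightarrow> nat \<Rightarrow> real" where
  "qmom rho u k i = (rho k i * uhat u k i + rho k (Suc i) * uhat u k (Suc i)) / 2"

definition numsol ::
  "real \<Rightarrow> real \<Rightarrow> real \<Rightarrow> real \<Rightarrow> real \<Rightarrow> (real \<Rightarrow> real) \<Rightarrow> (real \<Rightarrow> real) \<Rightarrow> nat \<Rightarrow> nat
   \<Rightarrow> (nat \<Rightarrow> nat \<Rightarrow> real) \<Rightarrow> (nat \<Rightarrow> nat \<Rightarrow> real) \<Rightarrow> bool" where
  "numsol L T mu a gam rho0 u0 N M rho u \<longleftrightarrow>
     (let dx = L / real N; dt = T / real M in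
      (\<forall>i<N. rho 0 i = (1 / dx) * (LBINT x = real i * dx..real (Suc i) * dx. rho0 x)) \<and>
      (\<forall>j\<le>N. u 0 j = u0 (real j * dx)) \<and>
      (\<forall>k\<in>{1..M}. u k 0 = 0 \<and> u k N = 0) \<and>
      (\<forall>k\<in>{0..M}. \<forall>i<N. rho k i > 0) \<and>
      (\<forall>k\<in>{1..M}. \<forall>i<N.
          (rho k i - rho (k - 1) i) / dt + (UpM N rho u k (Suc i) - UpM N rho u k i) / dx = 0) \<and>
      (\<forall>k\<in>{1..M}. \<forall>i<N - 1.
          (qmom rho u k i - qmom rho u (k - 1) i) / dt
          + (UpQ N rho u k (i + 2) - UpQ N rho u k i) / (2 * dx)
          = mu * (u k i - 2 * u k (Suc i) + u k (i + 2)) / dx\<^sup>2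
            - (pressure a gam (rho k (Suc i)) - pressure a gam (rho k i)) / dx))"

definition E1 :: "real \<Rightarrow> real \<Rightarrow> nat \<Rightarrow> (nat \<Rightarrow> nat \<Rightarrow> real) \<Rightarrow> (nat \<Rightarrow> nat \<Rightarrow> real) \<Rightarrow> nat \<Rightarrow> real" where
  "E1 dt dx N rho u m =
     - dt * dx * (\<Sum>k\<in>{1..m}. \<Sum>i<N - 1.
          UpM N rho u k (Suc i) * (qmom rho u k i - qmom rho u (k - 1) i))"

end

theory Submission
  imports Defs
begin

text \<open>Testing the momentum equation with the velocity gives a discrete energy inequality: upwinding
  makes convection dissipative and the pressure potential is convex. As the initial energy is
  \<open>O(1/h)\<close>, the inequality bounds \<open>\<Sum>\<^sub>i \<rho>\<^sub>i\<^sup>\<gamma>\<close> by \<open>K/h\<close>, hence every density by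
  \<open>R = (K/h) powr (1/\<gamma>)\<close>; it also bounds the summed velocity dissipation \<open>\<Sum> |u\<^sub>j\<^sub>+\<^sub>1 - u\<^sub>j|\<^sup>2\<close>
  by a constant and the summed numerical dissipation \<open>\<Sum> \<rho>\<^sup>k\<^sup>-\<^sup>1 |uhat\<^sup>k - uhat\<^sup>k\<^sup>-\<^sup>1|\<^sup>2\<close> by \<open>O(1/h)\<close>.
  Through the mass equation each time summand of \<open>E\<^sub>1\<close> splits into a term estimated by
  Cauchy-Schwarz against the numerical dissipation and a flux term estimated against the velocity
  dissipation, point values of \<open>u\<close> being controlled by a discrete Poincar\'e inequality. The powers
  of \<open>R\<close> and \<open>h\<close> combine to \<open>h powr ((2\<gamma> - 3) / (2\<gamma>))\<close>, which is small exactly when \<open>\<gamma> > 3/2\<close>.\<close>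

section \<open>Discrete calculus\<close>

lemma sum_mult_adjacent_sum:
  fixes a G :: "nat \<Rightarrow> 'a::comm_ring"
  assumes "a 0 = 0" "a (Suc n) = 0"
  shows "(\<Sum>i<n. a (i+1) * (G i + G (i+1))) = (\<Sum>j<Suc n. (a j + a (j+1)) * G j)"
proof -
  have "(\<Sum>i<n. a (i+1) * (G i + G (i+1)))
      = (\<Sum>j<Suc n. (a j + a (j+1)) * G j) - a 0 * G 0 - a (Suc n) * G n"
    by (induction n) (simp_all add: algebra_simps)
  with assms show ?thesis by simp
qed

lemma sum_mult_second_difference:
  fixes a :: "nat \<Rightarrow> 'a::comm_ring_1"
  assumes "a 0 = 0" "a (Suc n) = 0"
  shows "(\<Sum>i<n. a (i+1) * (a i - 2 * a (i+1) + a (i+2))) = - (\<Sum>j<Suc n. (a (j+1) - a j)^2)"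
proof -
  have "(\<Sum>i<n. a (i+1) * (a i - 2 * a (i+1) + a (i+2)))
      = - (\<Sum>j<Suc n. (a (j+1) - a j)^2) - a 0 * (a 1 - a 0) + a (n+1) * (a (n+1) - a n)"
    by (induction n) (simp_all add: algebra_simps power2_eq_square)
  with assms show ?thesis by simp
qed

lemma summation_by_parts:
  fixes a G :: "nat \<Rightarrow> 'a::comm_ring"
  assumes "G 0 = 0" "G n = 0"
  shows "(\<Sum>j<n. a j * (G (j+1) - G j)) = - (\<Sum>j<n. G (j+1) * (a (j+1) - a j))"
proof -
  have "(\<Sum>j<n. a j * (G (j+1) - G j)) = a n * G n - a 0 * G 0 - (\<Sum>j<n. G (j+1) * (a (j+1) - a j))"
    by (induction n) (simp_all add: algebra_simps)
  with assms show ?thesis by simp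
qed

lemma sum_shift_le_sum:
  fixes f :: "nat \<Rightarrow> real"
  assumes "\<And>j. j < N \<Longrightarrow> 0 \<le> f j"
  shows "(\<Sum>j<N - 1. f (j+1)) \<le> (\<Sum>j<N. f j)"
proof -
  have "(\<Sum>j<N - 1. f (j+1)) = (\<Sum>j\<in>Suc ` {..<N - 1}. f j)"
    by (simp add: sum.reindex)
  also have "\<dots> \<le> (\<Sum>j<N. f j)"
    by (rule sum_mono2) (use assms in auto)
  finally show ?thesis .
qed

lemma weighted_Cauchy_Schwarz:
  fixes w x y :: "'a \<Rightarrow> real"
  assumes "\<And>j. j \<in> A \<Longrightarrow> 0 \<le> w j"
  shows "(\<Sum>j\<in>A. w j * x j * y j)^2 \<le> (\<Sum>j\<in>A. w j * (x j)^2) * (\<Sum>j\<in>A. w j * (y j)^2)"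
proof -
  have "(\<Sum>j\<in>A. (sqrt (w j) * x j) * (sqrt (w j) * y j))^2
      \<le> (\<Sum>j\<in>A. (sqrt (w j) * x j)^2) * (\<Sum>j\<in>A. (sqrt (w j) * y j)^2)"
    by (rule Cauchy_Schwarz_ineq_sum)
  moreover have "(\<Sum>j\<in>A. (sqrt (w j) * x j) * (sqrt (w j) * y j)) = (\<Sum>j\<in>A. w j * x j * y j)"
    by (rule sum.cong) (use assms in \<open>auto simp: algebra_simps\<close>)
  moreover have "\<And>z. (\<Sum>j\<in>A. (sqrt (w j) * z j)^2) = (\<Sum>j\<in>A. w j * (z j)^2)"
    by (rule sum.cong) (use assms in \<open>auto simp: power_mult_distrib\<close>)
  ultimately show ?thesis by simp
qed

lemma sq_le_mult_sum_sq_diff: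
  fixes u :: "nat \<Rightarrow> real"
  assumes "u 0 = 0" "n \<le> N"
  shows "(u n)^2 \<le> real N * (\<Sum>m<N. (u (m+1) - u m)^2)"
proof -
  have "u n = (\<Sum>m<n. (u (m+1) - u m) * 1)"
    using assms(1) by (simp add: sum_lessThan_telescope)
  hence "(u n)^2 \<le> (\<Sum>m<n. (u (m+1) - u m)^2) * (\<Sum>m<n. 1^2)"
    using Cauchy_Schwarz_ineq_sum[of "\<lambda>m. u (m+1) - u m" "\<lambda>_. 1" "{..<n}"] by simp
  also have "\<dots> \<le> (\<Sum>m<N. (u (m+1) - u m)^2) * real N"
    using assms(2) by (intro mult_mono sum_mono2) (auto intro: sum_nonneg)
  finally show ?thesis by (simp add: mult.commute)
qed

lemma sq_add_le: "((x::real) + y)^2 \<le> 2 * x^2 + 2 * y^2"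
  using zero_le_power2[of "x - y"] by (simp add: power2_diff power2_sum)

lemma powr_ge_tangent:
  fixes r s g :: real
  assumes "0 \<le> r" "0 < s" "1 \<le> g"
  shows "s powr g + g * s powr (g - 1) * (r - s) \<le> r powr g"
proof (cases "r = 0")
  case True
  have "s powr (g - 1) * s = s powr g"
    using assms by (simp add: powr_diff field_simps)
  with True assms show ?thesis by (simp add: algebra_simps)
next
  case False
  have "g * s powr (g - 1) * (r - s) \<le> (\<lambda>x. x powr g) r - (\<lambda>x. x powr g) s"
  proof (rule convex_on_imp_above_tangent[where A="{0<..}"])
    show "convex_on {0<..} (\<lambda>x. x powr g)" using powr_convex assms by blast
    show "((\<lambda>x. x powr g) has_field_derivative g * s powr (g - 1)) (at s within {0<..})"
      using assms by (auto intro!: derivative_eq_intros)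
  qed (use assms False in \<open>auto simp: interior_open\<close>)
  thus ?thesis by simp
qed

lemma le_one_plus_powr:
  fixes x g :: real
  assumes "0 \<le> x" "1 \<le> g"
  shows "x \<le> 1 + x powr g"
proof (cases "x \<le> 1")
  case True thus ?thesis using powr_ge_zero[of x g] by linarith
next
  case False
  hence "x powr 1 \<le> x powr g" using assms by (intro powr_mono) auto
  thus ?thesis using False by simp
qed

section \<open>Pressure potential\<close>

text \<open>\<open>\<Pi>\<close> is determined by \<open>\<rho> \<Pi>'(\<rho>) - \<Pi>(\<rho>) = p(\<rho>)\<close>; \<open>enthalpy\<close> is \<open>\<Pi>'\<close>.\<close>
definition pressure_potential :: "real \<Rightarrow> real \<Rightarrow> real \<Rightarrow> real" where
  "pressure_potential a g r = a / (g - 1) * r powr g"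

definition enthalpy :: "real \<Rightarrow> real \<Rightarrow> real \<Rightarrow> real" where
  "enthalpy a g r = a / (g - 1) * g * r powr (g - 1)"

lemma pressure_potential_ge_tangent:
  assumes "0 \<le> r" "0 < s" "1 < g" "0 < a"
  shows "pressure_potential a g s + enthalpy a g s * (r - s) \<le> pressure_potential a g r"
proof -
  define c where "c = a / (g - 1)"
  have "c * (s powr g + g * s powr (g - 1) * (r - s)) \<le> c * r powr g"
    using assms powr_ge_tangent[of r s g] unfolding c_def by (intro mult_left_mono) auto
  thus ?thesis
    unfolding pressure_potential_def enthalpy_def c_def[symmetric] by (simp add: algebra_simps)
qed

lemma pressure_eq_enthalpy:
  assumes "0 < r" "1 < g"
  shows "pressure a g r = r * enthalpy a g r - pressure_potential a g r"
proof -
  define c where "c = a / (g - 1)"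
  have "r * r powr (g - 1) = r powr g" using assms by (simp add: powr_diff field_simps)
  hence "r * enthalpy a g r - pressure_potential a g r = c * (g - 1) * r powr g"
    unfolding enthalpy_def pressure_potential_def c_def[symmetric] by (simp add: algebra_simps)
  thus ?thesis using assms unfolding pressure_def c_def by simp
qed

text \<open>Pressure work of an upwind flux: the tangent inequality for \<open>\<Pi>\<close> is taken at the upwind density.\<close>
lemma upwind_enthalpy_work_le:
  assumes x: "0 < x" and y: "0 < y" and g: "1 < g" and a: "0 < a"
  shows "(x * ppart v + y * npart v) * (enthalpy a g y - enthalpy a g x) \<le> v * (pressure a g y - pressure a g x)"
proof (cases "0 \<le> v")
  case True
  have "x * (enthalpy a g y - enthalpy a g x) \<le> pressure a g y - pressure a g x"
    using pressure_potential_ge_tangent[of x y g a] pressure_eq_enthalpy[OF x g, of a]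
      pressure_eq_enthalpy[OF y g, of a] assms by (simp add: algebra_simps)
  hence "v * (x * (enthalpy a g y - enthalpy a g x)) \<le> v * (pressure a g y - pressure a g x)"
    using True by (rule mult_left_mono)
  thus ?thesis using True by (simp add: ppart_def npart_def algebra_simps)
next
  case False
  have "pressure a g y - pressure a g x \<le> y * (enthalpy a g y - enthalpy a g x)"
    using pressure_potential_ge_tangent[of y x g a] pressure_eq_enthalpy[OF x g, of a]
      pressure_eq_enthalpy[OF y g, of a] assms by (simp add: algebra_simps)
  hence "v * (y * (enthalpy a g y - enthalpy a g x)) \<le> v * (pressure a g y - pressure a g x)"
    using False by (intro mult_left_mono_neg) auto
  thus ?thesis using False by (simp add: ppart_def npart_def algebra_simps)
qed

section \<open>Energy inequality\<close>

lemma UpM_boundary [simp]: "UpM N rho u k 0 = 0" "UpM N rho u k N = 0"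
  by (auto simp: UpM_def)

lemma UpQ_boundary [simp]: "UpQ N rho u k 0 = 0" "UpQ N rho u k N = 0"
  by (auto simp: UpQ_def)

text \<open>The energies are those of the paper divided by \<open>\<Delta>x\<close>, the kinetic one without its factor \<open>1/2\<close>.\<close>
definition kinetic_energy :: "nat \<Rightarrow> (nat \<Rightarrow> nat \<Rightarrow> real) \<Rightarrow> (nat \<Rightarrow> nat \<Rightarrow> real) \<Rightarrow> nat \<Rightarrow> real" where
  "kinetic_energy N rho u k = (\<Sum>j<N. rho k j * (uhat u k j)^2)"

definition internal_energy :: "real \<Rightarrow> real \<Rightarrow> nat \<Rightarrow> (nat \<Rightarrow> nat \<Rightarrow> real) \<Rightarrow> nat \<Rightarrow> real" where
  "internal_energy a g N rho k = (\<Sum>j<N. pressure_potential a g (rho k j))"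

definition velocity_dissipation :: "nat \<Rightarrow> (nat \<Rightarrow> nat \<Rightarrow> real) \<Rightarrow> nat \<Rightarrow> real" where
  "velocity_dissipation N u k = (\<Sum>j<N. (u k (Suc j) - u k j)^2)"

definition time_dissipation :: "nat \<Rightarrow> (nat \<Rightarrow> nat \<Rightarrow> real) \<Rightarrow> (nat \<Rightarrow> nat \<Rightarrow> real) \<Rightarrow> nat \<Rightarrow> real" where
  "time_dissipation N rho u k = (\<Sum>j<N. rho (k - 1) j * (uhat u k j - uhat u (k - 1) j)^2)"

text \<open>Time step \<open>k\<close> of the scheme for \<open>\<Delta>t = \<Delta>x = h\<close>, both equations multiplied by \<open>h\<close>.\<close>
definition scheme_step ::
  "nat \<Rightarrow> real \<Rightarrow> real \<Rightarrow> real \<Rightarrow> real \<Rightarrow> (nat \<Rightarrow> nat \<Rightarrow> real) \<Rightarrow> (nat \<Rightarrow> nat \<Rightarrow> real) \<Rightarrow> nat \<Rightarrow> bool" where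
  "scheme_step N h mu a g rho u k \<longleftrightarrow>
     (\<forall>i<N. 0 < rho k i \<and> 0 < rho (k - 1) i) \<and> u k 0 = 0 \<and> u k N = 0 \<and>
     (\<forall>i<N. rho k i - rho (k - 1) i = UpM N rho u k i - UpM N rho u k (Suc i)) \<and>
     (\<forall>i<N - 1. qmom rho u k i - qmom rho u (k - 1) i + (UpQ N rho u k (i + 2) - UpQ N rho u k i) / 2
        = mu / h * (u k i - 2 * u k (Suc i) + u k (i + 2))
          - (pressure a g (rho k (Suc i)) - pressure a g (rho k i)))"

lemma kinetic_energy_increment:
  assumes mass: "\<forall>j<N. rho k j - rho (k - 1) j = F j - F (Suc j)"
  shows "(\<Sum>j<N. uhat u k j * (rho k j * uhat u k j - rho (k - 1) j * uhat u (k - 1) j))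
    = kinetic_energy N rho u k / 2 - kinetic_energy N rho u (k - 1) / 2 + time_dissipation N rho u k / 2
      - (\<Sum>j<N. (uhat u k j)^2 * (F (Suc j) - F j)) / 2"
proof -
  have "(\<Sum>j<N. uhat u k j * (rho k j * uhat u k j - rho (k - 1) j * uhat u (k - 1) j))
      = (\<Sum>j<N. (rho k j * (uhat u k j)^2 - rho (k - 1) j * (uhat u (k - 1) j)^2
           + rho (k - 1) j * (uhat u k j - uhat u (k - 1) j)^2 - (uhat u k j)^2 * (F (Suc j) - F j)) / 2)"
  proof (rule sum.cong)
    fix j assume "j \<in> {..<N}"
    with mass have m: "rho k j = rho (k - 1) j + F j - F (Suc j)" by auto
    show "uhat u k j * (rho k j * uhat u k j - rho (k - 1) j * uhat u (k - 1) j)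
      = (rho k j * (uhat u k j)^2 - rho (k - 1) j * (uhat u (k - 1) j)^2
         + rho (k - 1) j * (uhat u k j - uhat u (k - 1) j)^2 - (uhat u k j)^2 * (F (Suc j) - F j)) / 2"
      unfolding m by (simp add: algebra_simps power2_eq_square)
  qed simp
  thus ?thesis
    unfolding kinetic_energy_def time_dissipation_def
    by (simp add: sum_divide_distrib[symmetric] sum.distrib sum_subtractf)
qed

lemma upwind_convection_nonneg:
  assumes pos: "\<forall>i<N. 0 < rho k i"
  shows "(\<Sum>j<N. (uhat u k j)^2 * (UpM N rho u k (Suc j) - UpM N rho u k j)) / 2
      \<le> (\<Sum>j<N. uhat u k j * (UpQ N rho u k (j+1) - UpQ N rho u k j))"
proof -
  define F where "F = UpM N rho u k"
  define Q where "Q = UpQ N rho u k"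
  define ub where "ub = uhat u k"
  have "0 \<le> (\<Sum>j<N. F (j+1) * ((ub (j+1))^2 - (ub j)^2) / 2 - Q (j+1) * (ub (j+1) - ub j))"
  proof (rule sum_nonneg)
    fix j assume j: "j \<in> {..<N}"
    show "0 \<le> F (j+1) * ((ub (j+1))^2 - (ub j)^2) / 2 - Q (j+1) * (ub (j+1) - ub j)"
    proof (cases "Suc j < N")
      case True
      define v where "v = u k (Suc j)"
      have node: "1 \<le> Suc j \<and> Suc j \<le> N - 1" using True by simp
      have "F (j+1) * ((ub (j+1))^2 - (ub j)^2) / 2 - Q (j+1) * (ub (j+1) - ub j)
          = (rho k j * ppart v + rho k (Suc j) * (- npart v)) * (ub (j+1) - ub j)^2 / 2"
        using node unfolding F_def Q_def UpM_def UpQ_def ub_def v_def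
        by (simp add: field_simps power2_eq_square)
      also have "0 \<le> \<dots>"
      proof -
        have "0 \<le> ppart v" "0 \<le> - npart v" by (simp_all add: ppart_def npart_def)
        moreover have "0 < rho k j" "0 < rho k (Suc j)" using pos True by auto
        ultimately show ?thesis
          by (intro divide_nonneg_nonneg mult_nonneg_nonneg add_nonneg_nonneg) simp_all
      qed
      finally show ?thesis .
    next
      case False
      with j have "Suc j = N" by simp
      thus ?thesis by (simp add: F_def Q_def)
    qed
  qed
  also have "\<dots> = (\<Sum>j<N. ub j * (Q (j+1) - Q j)) - (\<Sum>j<N. (ub j)^2 * (F (Suc j) - F j)) / 2"
    using summation_by_parts[of Q N ub] summation_by_parts[of F N "\<lambda>j. (ub j)^2"]
    by (simp add: F_def Q_def sum_subtractf sum_divide_distrib)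
  finally show ?thesis unfolding F_def Q_def ub_def by simp
qed

lemma pressure_work_ge:
  assumes g: "1 < g" and a: "0 < a"
    and pos: "\<forall>i<N. 0 < rho k i \<and> 0 < rho (k - 1) i"
    and mass: "\<forall>i<N. rho k i - rho (k - 1) i = UpM N rho u k i - UpM N rho u k (Suc i)"
  shows "internal_energy a g N rho k - internal_energy a g N rho (k - 1)
      \<le> (\<Sum>i<N - 1. u k (i+1) * (pressure a g (rho k (Suc i)) - pressure a g (rho k i)))"
proof -
  define F where "F = UpM N rho u k"
  define e where "e = (\<lambda>j. enthalpy a g (rho k j))"
  have "internal_energy a g N rho k - internal_energy a g N rho (k - 1)
      = (\<Sum>j<N. pressure_potential a g (rho k j) - pressure_potential a g (rho (k - 1) j))"
    unfolding internal_energy_def by (simp add: sum_subtractf)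
  also have "\<dots> \<le> (\<Sum>j<N. e j * (F j - F (Suc j)))"
  proof (rule sum_mono)
    fix j assume "j \<in> {..<N}"
    hence "pressure_potential a g (rho k j) + e j * (F (Suc j) - F j) \<le> pressure_potential a g (rho (k - 1) j)"
      using pressure_potential_ge_tangent[of "rho (k - 1) j" "rho k j" g a] pos mass g a
      unfolding e_def F_def by (smt (verit, best) lessThan_iff)
    thus "pressure_potential a g (rho k j) - pressure_potential a g (rho (k - 1) j) \<le> e j * (F j - F (Suc j))"
      by (simp add: algebra_simps)
  qed
  also have "\<dots> = - (\<Sum>j<N. e j * (F (j+1) - F j))"
    by (simp add: sum_negf[symmetric] algebra_simps)
  also have "\<dots> = (\<Sum>j<N. F (j+1) * (e (j+1) - e j))"
    using summation_by_parts[of F N e] by (simp add: F_def)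
  also have "\<dots> = (\<Sum>j<N - 1. F (j+1) * (e (j+1) - e j))"
    by (cases N) (simp_all add: F_def)
  also have "\<dots> \<le> (\<Sum>i<N - 1. u k (i+1) * (pressure a g (rho k (Suc i)) - pressure a g (rho k i)))"
  proof (rule sum_mono)
    fix j assume "j \<in> {..<N - 1}"
    hence "Suc j < N" by simp
    thus "F (j+1) * (e (j+1) - e j) \<le> u k (j+1) * (pressure a g (rho k (Suc j)) - pressure a g (rho k j))"
      using upwind_enthalpy_work_le[of "rho k j" "rho k (Suc j)" g a] pos g a
      unfolding F_def e_def UpM_def by auto
  qed
  finally show ?thesis .
qed

lemma momentum_tested_with_velocity:
  assumes N: "1 \<le> N" and bc: "u k 0 = 0" "u k N = 0"
    and mom: "\<forall>i<N - 1. qmom rho u k i - qmom rho u (k - 1) i + (UpQ N rho u k (i + 2) - UpQ N rho u k i) / 2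
        = mu / h * (u k i - 2 * u k (Suc i) + u k (i + 2))
          - (pressure a g (rho k (Suc i)) - pressure a g (rho k i))"
  shows "(\<Sum>j<N. uhat u k j * (rho k j * uhat u k j - rho (k - 1) j * uhat u (k - 1) j))
       + (\<Sum>j<N. uhat u k j * (UpQ N rho u k (j+1) - UpQ N rho u k j))
    = - (mu / h * velocity_dissipation N u k)
      - (\<Sum>i<N - 1. u k (i+1) * (pressure a g (rho k (Suc i)) - pressure a g (rho k i)))"
proof -
  obtain n where n: "N = Suc n" using N by (cases N) auto
  define v where "v = u k"
  define P where "P = (\<lambda>i. pressure a g (rho k (Suc i)) - pressure a g (rho k i))"
  define H where "H = (\<lambda>j. rho k j * uhat u k j - rho (k - 1) j * uhat u (k - 1) j
                         + (UpQ N rho u k (j+1) - UpQ N rho u k j))"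
  have mom_H: "(H i + H (i+1)) / 2 = mu / h * (v i - 2 * v (Suc i) + v (i+2)) - P i" if "i < n" for i
  proof -
    have "qmom rho u k i - qmom rho u (k - 1) i + (UpQ N rho u k (i + 2) - UpQ N rho u k i) / 2
        = (H i + H (i+1)) / 2"
      unfolding H_def qmom_def by (simp add: field_simps)
    with mom that show ?thesis unfolding n v_def P_def by auto
  qed
  have "(\<Sum>j<N. uhat u k j * H j) = (\<Sum>j<Suc n. (v j + v (j+1)) * H j) / 2"
    unfolding n v_def uhat_def sum_divide_distrib by (rule sum.cong) simp_all
  also have "\<dots> = (\<Sum>i<n. v (i+1) * (H i + H (i+1))) / 2"
    using sum_mult_adjacent_sum[of v n H] bc unfolding n v_def by simp
  also have "\<dots> = (\<Sum>i<n. v (i+1) * (mu / h * (v i - 2 * v (Suc i) + v (i+2)) - P i))"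
    unfolding sum_divide_distrib
    by (rule sum.cong) (simp_all only: lessThan_iff times_divide_eq_right[symmetric] mom_H)
  also have "\<dots> = mu / h * (\<Sum>i<n. v (i+1) * (v i - 2 * v (i+1) + v (i+2))) - (\<Sum>i<n. v (i+1) * P i)"
    unfolding sum_distrib_left sum_subtractf[symmetric] by (rule sum.cong) (simp_all add: algebra_simps)
  also have "\<dots> = - (mu / h * velocity_dissipation N u k) - (\<Sum>i<n. v (i+1) * P i)"
  proof -
    have "(\<Sum>i<n. v (i+1) * (v i - 2 * v (i+1) + v (i+2))) = - velocity_dissipation N u k"
      using sum_mult_second_difference[of v n] bc unfolding n v_def velocity_dissipation_def by simp
    thus ?thesis by simp
  qed
  finally show ?thesis
    unfolding H_def v_def P_def n by (simp add: distrib_left sum.distrib)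
qed

lemma energy_step:
  assumes "1 \<le> N" "1 < g" "0 < a" and step: "scheme_step N h mu a g rho u k"
  shows "kinetic_energy N rho u k / 2 + internal_energy a g N rho k
         + mu / h * velocity_dissipation N u k + time_dissipation N rho u k / 2
       \<le> kinetic_energy N rho u (k - 1) / 2 + internal_energy a g N rho (k - 1)"
proof -
  from step have pos: "\<forall>i<N. 0 < rho k i \<and> 0 < rho (k - 1) i"
    and bc: "u k 0 = 0" "u k N = 0"
    and mass: "\<forall>i<N. rho k i - rho (k - 1) i = UpM N rho u k i - UpM N rho u k (Suc i)"
    and mom: "\<forall>i<N - 1. qmom rho u k i - qmom rho u (k - 1) i + (UpQ N rho u k (i + 2) - UpQ N rho u k i) / 2
        = mu / h * (u k i - 2 * u k (Suc i) + u k (i + 2))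
          - (pressure a g (rho k (Suc i)) - pressure a g (rho k i))"
    unfolding scheme_step_def by blast+
  show ?thesis
    using momentum_tested_with_velocity[OF assms(1) bc mom] kinetic_energy_increment[OF mass, of u]
      upwind_convection_nonneg[of N rho k u] pressure_work_ge[OF assms(2,3) pos mass] pos
    by simp
qed

lemma energy_inequality:
  assumes "1 \<le> N" "1 < g" "0 < a" and steps: "\<forall>k\<in>{1..M}. scheme_step N h mu a g rho u k"
    and "k \<le> M"
  shows "kinetic_energy N rho u k / 2 + internal_energy a g N rho k
         + mu / h * (\<Sum>l\<in>{1..k}. velocity_dissipation N u l) + (\<Sum>l\<in>{1..k}. time_dissipation N rho u l) / 2
       \<le> kinetic_energy N rho u 0 / 2 + internal_energy a g N rho 0"
  using \<open>k \<le> M\<close>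
proof (induction k)
  case (Suc k)
  with steps have "scheme_step N h mu a g rho u (Suc k)" by simp
  from energy_step[OF assms(1-3) this] Suc show ?case
    by (simp add: distrib_left add_divide_distrib)
qed simp

section \<open>Initial energy\<close>

lemma set_integrable_const_Ioo: "set_integrable lborel {c<..<d::real} (\<lambda>_. k::real)"
proof -
  have "set_integrable lborel {c..d} (\<lambda>_. k::real)"
    by (rule borel_integrable_atLeastAtMost') (simp add: continuous_on_const)
  thus ?thesis by (rule set_integrable_subset) auto
qed

text \<open>Jensen's inequality on a cell, via the tangent line of \<open>x powr g\<close> at the mean.\<close>
lemma set_integral_powr_ge_mean:
  fixes f :: "real \<Rightarrow> real"
  assumes fi: "set_integrable lborel {c<..<d} f"
    and gi: "set_integrable lborel {c<..<d} (\<lambda>x. \<bar>f x\<bar> powr g)"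
    and cd: "c < d" and g: "1 \<le> g" and fpos: "\<forall>x\<in>{c<..<d}. 0 \<le> f x"
    and m: "m = (LINT x:{c<..<d}|lborel. f x) / (d - c)" and mpos: "0 < m"
  shows "(d - c) * m powr g \<le> (LINT x:{c<..<d}|lborel. \<bar>f x\<bar> powr g)"
proof -
  define B where "B = g * m powr (g - 1)"
  define A where "A = m powr g - B * m"
  have i1: "set_integrable lborel {c<..<d} (\<lambda>x. B * f x)" using fi by simp
  have i2: "set_integrable lborel {c<..<d} (\<lambda>x. A + B * f x)"
    using i1 set_integrable_const_Ioo by (rule set_integral_add(1)[rotated])
  have "(LINT x:{c<..<d}|lborel. A + B * f x) = A * (d - c) + B * (LINT x:{c<..<d}|lborel. f x)"
    using set_integral_add(2)[OF set_integrable_const_Ioo i1, of A] cd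
    by (simp add: set_integral_const)
  also have "\<dots> = (d - c) * m powr g"
    using m cd unfolding A_def by (simp add: field_simps)
  finally have "(d - c) * m powr g = (LINT x:{c<..<d}|lborel. A + B * f x)" ..
  also have "\<dots> \<le> (LINT x:{c<..<d}|lborel. \<bar>f x\<bar> powr g)"
  proof (rule set_integral_mono[OF i2 gi])
    fix x assume "x \<in> {c<..<d}"
    with fpos have "0 \<le> f x" by auto
    with powr_ge_tangent[OF this mpos g] show "A + B * f x \<le> \<bar>f x\<bar> powr g"
      unfolding A_def B_def by (simp add: algebra_simps)
  qed
  finally show ?thesis .
qed

lemma interval_integral_sum_cells:
  fixes phi :: "real \<Rightarrow> real"
  assumes int: "set_integrable lborel {0..L} phi" and h: "0 < h"
  shows "real n * h \<le> L \<Longrightarrow>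
    (\<Sum>i<n. LBINT x = real i * h..real (Suc i) * h. phi x) = (LBINT x = 0..real n * h. phi x)"
proof (induction n)
  case 0
  then show ?case
    by (simp add: interval_lebesgue_integral_def zero_ereal_def einterval_same set_lebesgue_integral_def)
next
  case (Suc n)
  have le: "real n * h \<le> L" using Suc.prems h by (simp add: distrib_right)
  have ord: "0 \<le> real n * h" "real n * h \<le> real (Suc n) * h" using h by auto
  have "set_integrable lborel {0<..<real (Suc n) * h} phi"
    by (rule set_integrable_subset[OF int]) (use Suc.prems in auto)
  hence int': "interval_lebesgue_integrable lborel (ereal 0) (ereal (real (Suc n) * h)) phi"
    using ord unfolding interval_lebesgue_integrable_def by simp
  have "(LBINT x = ereal 0..ereal (real n * h). phi x) + (LBINT x = ereal (real n * h)..ereal (real (Suc n) * h). phi x)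
      = (LBINT x = ereal 0..ereal (real (Suc n) * h). phi x)"
    by (rule interval_integral_sum) (use int' ord in \<open>simp add: min_def max_def\<close>)
  thus ?case using Suc.IH[OF le] by (simp add: zero_ereal_def)
qed

lemma set_integrable_of_powr:
  fixes f :: "real \<Rightarrow> real"
  assumes "1 \<le> g" "set_borel_measurable lborel {0..L} f"
    and "set_integrable lborel {0..L} (\<lambda>x. \<bar>f x\<bar> powr g)"
  shows "set_integrable lborel {0..L} f"
proof (rule set_integrable_bound[OF set_integral_add(1)[OF _ assms(3)] assms(2)])
  show "set_integrable lborel {0..L} (\<lambda>_. 1::real)"
    by (rule borel_integrable_atLeastAtMost') (simp add: continuous_on_const)
  show "AE x in lborel. x \<in> {0..L} \<longrightarrow> norm (f x) \<le> norm (1 + \<bar>f x\<bar> powr g)"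
    using le_one_plus_powr[of "\<bar>f _\<bar>" g] assms(1) by auto
qed

lemma cell_averages_powr_sum_le:
  fixes L g :: real and f :: "real \<Rightarrow> real" and N :: nat and r :: "nat \<Rightarrow> real"
  assumes L: "0 < L" and g: "1 \<le> g" and N: "1 \<le> N" and h: "h = L / real N"
    and meas: "set_borel_measurable lborel {0..L} f"
    and int: "set_integrable lborel {0..L} (\<lambda>x. \<bar>f x\<bar> powr g)"
    and fpos: "\<forall>x\<in>{0<..<L}. 0 < f x"
    and r: "\<forall>i<N. r i = (1 / h) * (LBINT x = real i * h..real (Suc i) * h. f x)"
    and rpos: "\<forall>i<N. 0 < r i"
  shows "(\<Sum>i<N. r i powr g) \<le> (LBINT x = 0..L. \<bar>f x\<bar> powr g) / h"
proof -
  have h0: "0 < h" and Nh: "real N * h = L" using L N h by auto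
  have rint: "set_integrable lborel {0..L} f" by (rule set_integrable_of_powr[OF g meas int])
  have cell: "h * r i powr g \<le> (LBINT x = real i * h..real (Suc i) * h. \<bar>f x\<bar> powr g)" if i: "i < N" for i
  proof -
    define c where "c = real i * h"
    define d where "d = real (Suc i) * h"
    have cd: "c < d" "d - c = h" "0 \<le> c" unfolding c_def d_def using h0 by (auto simp: algebra_simps)
    have "d \<le> L" unfolding d_def Nh[symmetric] using i h0 by (intro mult_right_mono) auto
    hence sub: "{c<..<d} \<subseteq> {0..L}" using cd by auto
    have "(d - c) * r i powr g \<le> (LINT x:{c<..<d}|lborel. \<bar>f x\<bar> powr g)"
    proof (rule set_integral_powr_ge_mean)
      show "set_integrable lborel {c<..<d} f" "set_integrable lborel {c<..<d} (\<lambda>x. \<bar>f x\<bar> powr g)"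
        using set_integrable_subset[OF rint _ sub] set_integrable_subset[OF int _ sub] by simp_all
      show "r i = (LINT x:{c<..<d}|lborel. f x) / (d - c)"
        using r i cd unfolding c_def d_def by (simp add: interval_lebesgue_integral_def)
      show "\<forall>x\<in>{c<..<d}. 0 \<le> f x" using fpos sub \<open>d \<le> L\<close> cd by (auto intro: less_imp_le)
    qed (use cd g rpos i in auto)
    thus ?thesis using cd unfolding c_def d_def by (simp add: interval_lebesgue_integral_def)
  qed
  have "h * (\<Sum>i<N. r i powr g) \<le> (\<Sum>i<N. LBINT x = real i * h..real (Suc i) * h. \<bar>f x\<bar> powr g)"
    unfolding sum_distrib_left by (rule sum_mono) (use cell in auto)
  also have "\<dots> = (LBINT x = 0..L. \<bar>f x\<bar> powr g)"
    using interval_integral_sum_cells[OF int h0, of N] Nh by simp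
  finally show ?thesis using h0 by (simp add: field_simps)
qed

lemma interval_integral_abs_powr_nonneg: "c \<le> d \<Longrightarrow> 0 \<le> (LBINT x = c..d. \<bar>f x\<bar> powr (g::real))"
  by (simp add: interval_lebesgue_integral_def set_lebesgue_integral_def)

lemma internal_energy_eq: "internal_energy a g N rho k = a / (g - 1) * (\<Sum>j<N. rho k j powr g)"
  unfolding internal_energy_def pressure_potential_def by (simp add: sum_distrib_left)

lemma initial_energy_le:
  assumes Nh: "real N * h = L" and h: "0 < h" and g: "1 < g" and a: "0 < a"
    and u_init: "\<forall>j\<le>N. u 0 j = u0 (real j * h)" and B0: "\<forall>x\<in>{0..L}. \<bar>u0 x\<bar> \<le> B0"
    and pos: "\<forall>i<N. 0 < rho 0 i" and P0: "(\<Sum>j<N. rho 0 j powr g) \<le> I / h"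
  shows "kinetic_energy N rho u 0 / 2 + internal_energy a g N rho 0 \<le> (B0^2 / 2 * (L + I) + a / (g - 1) * I) / h"
proof -
  have u_bound: "\<bar>u 0 j\<bar> \<le> B0" if "j \<le> N" for j
  proof -
    have "real j * h \<le> L" unfolding Nh[symmetric] using that h by (intro mult_right_mono) auto
    thus ?thesis using u_init B0 that h by auto
  qed
  have uhat_sq: "(uhat u 0 j)^2 \<le> B0^2" if "j < N" for j
  proof -
    have "\<bar>uhat u 0 j\<bar> \<le> B0" using u_bound[of j] u_bound[of "Suc j"] that unfolding uhat_def by simp
    from power_mono[OF this abs_ge_zero, of 2] show ?thesis by simp
  qed
  have "(\<Sum>j<N. rho 0 j) \<le> (\<Sum>j<N. 1 + rho 0 j powr g)"
    using pos g by (intro sum_mono le_one_plus_powr) auto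
  also have "\<dots> = real N + (\<Sum>j<N. rho 0 j powr g)" by (simp add: sum.distrib)
  also have "\<dots> \<le> L / h + I / h"
  proof -
    have "real N = L / h" using Nh h by (simp add: eq_divide_eq)
    with P0 show ?thesis by linarith
  qed
  also have "\<dots> = (L + I) / h" by (simp add: add_divide_distrib)
  finally have mass0: "(\<Sum>j<N. rho 0 j) \<le> (L + I) / h" .
  have "kinetic_energy N rho u 0 \<le> (\<Sum>j<N. rho 0 j) * B0^2"
    unfolding kinetic_energy_def sum_distrib_right
    by (rule sum_mono) (use uhat_sq pos in \<open>auto intro: mult_left_mono\<close>)
  also have "\<dots> \<le> (L + I) / h * B0^2" using mass0 by (rule mult_right_mono) simp
  finally have "kinetic_energy N rho u 0 / 2 \<le> B0^2 / 2 * (L + I) / h" by (simp add: mult.commute)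
  moreover have "internal_energy a g N rho 0 \<le> a / (g - 1) * I / h"
    unfolding internal_energy_eq using mult_left_mono[OF P0, of "a / (g - 1)"] a g by simp
  moreover have "(B0^2 / 2 * (L + I) + a / (g - 1) * I) / h = B0^2 / 2 * (L + I) / h + a / (g - 1) * I / h"
    by (rule add_divide_distrib)
  ultimately show ?thesis by linarith
qed

lemma energy_consequences:
  assumes "1 \<le> N" "1 < g" "0 < a" "0 < h" "0 < mu"
    and steps: "\<forall>k\<in>{1..M}. scheme_step N h mu a g rho u k"
    and pos: "\<forall>k\<le>M. \<forall>i<N. 0 < rho k i"
    and init: "kinetic_energy N rho u 0 / 2 + internal_energy a g N rho 0 \<le> E / h"
  shows "(\<Sum>l\<in>{1..M}. velocity_dissipation N u l) \<le> E / mu"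
    and "(\<Sum>l\<in>{1..M}. time_dissipation N rho u l) \<le> 2 * E / h"
    and "k \<le> M \<Longrightarrow> kinetic_energy N rho u k \<le> 2 * E / h"
    and "k \<le> M \<Longrightarrow> (\<Sum>j<N. rho k j powr g) \<le> (g - 1) * E / (a * h)"
proof -
  have KE: "0 \<le> kinetic_energy N rho u k" and P: "0 \<le> (\<Sum>j<N. rho k j powr g)"
    and Sd: "0 \<le> (\<Sum>l\<in>{1..k}. velocity_dissipation N u l)" if "k \<le> M" for k
    using pos that unfolding kinetic_energy_def velocity_dissipation_def
    by (auto intro!: sum_nonneg mult_nonneg_nonneg simp: less_imp_le)
  have dd: "0 \<le> (\<Sum>l\<in>{1..k}. time_dissipation N rho u l)" if "k \<le> M" for k
    using pos that unfolding time_dissipation_def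
    by (auto intro!: sum_nonneg mult_nonneg_nonneg simp: less_imp_le)
  have bound: "kinetic_energy N rho u k / 2 + a / (g - 1) * (\<Sum>j<N. rho k j powr g)
      + mu / h * (\<Sum>l\<in>{1..k}. velocity_dissipation N u l) + (\<Sum>l\<in>{1..k}. time_dissipation N rho u l) / 2
      \<le> E / h" if "k \<le> M" for k
    using energy_inequality[OF assms(1-3) steps that] init unfolding internal_energy_eq by simp
  have PE: "0 \<le> a / (g - 1) * (\<Sum>j<N. rho k j powr g)"
    and Sd': "0 \<le> mu / h * (\<Sum>l\<in>{1..k}. velocity_dissipation N u l)" if "k \<le> M" for k
    using P[OF that] Sd[OF that] assms by simp_all
  have "mu / h * (\<Sum>l\<in>{1..M}. velocity_dissipation N u l) \<le> E / h"
    using bound[OF order_refl] KE[OF order_refl] PE[OF order_refl] dd[OF order_refl] by linarith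
  thus "(\<Sum>l\<in>{1..M}. velocity_dissipation N u l) \<le> E / mu"
    using assms by (simp add: field_simps)
  show "(\<Sum>l\<in>{1..M}. time_dissipation N rho u l) \<le> 2 * E / h"
    using bound[OF order_refl] KE[OF order_refl] PE[OF order_refl] Sd'[OF order_refl] by linarith
  assume k: "k \<le> M"
  show "kinetic_energy N rho u k \<le> 2 * E / h"
    using bound[OF k] PE[OF k] Sd'[OF k] dd[OF k] by linarith
  have "a / (g - 1) * (\<Sum>j<N. rho k j powr g) \<le> E / h"
    using bound[OF k] KE[OF k] Sd'[OF k] dd[OF k] by linarith
  thus "(\<Sum>j<N. rho k j powr g) \<le> (g - 1) * E / (a * h)"
    using assms by (simp add: field_simps)
qed

lemma le_powr_inverse_of_sum_powr_le:
  fixes r :: "nat \<Rightarrow> real"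
  assumes "\<forall>j<N. 0 < r j" "(\<Sum>j<N. r j powr g) \<le> S" "i < N" "0 < g"
  shows "r i \<le> S powr (1 / g)"
proof -
  have "r i powr g \<le> S"
    using assms member_le_sum[of i "{..<N}" "\<lambda>j. r j powr g"] by simp
  hence "(r i powr g) powr (1 / g) \<le> S powr (1 / g)"
    using assms by (intro powr_mono2) auto
  thus ?thesis using assms by (simp add: powr_powr)
qed

section \<open>Estimate of one time summand of \<open>E\<^sub>1\<close>\<close>

text \<open>The mass equation turns the momentum increment into the first term, which is controlled by
  the numerical dissipation; the second term is left by summation by parts.\<close>
lemma E1_summand_decomposition:
  assumes N: "1 \<le> N"
    and mass: "\<forall>i<N. rho k i - rho (k - 1) i = UpM N rho u k i - UpM N rho u k (Suc i)"
  shows "(\<Sum>i<N - 1. UpM N rho u k (Suc i) * (qmom rho u k i - qmom rho u (k - 1) i))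
    = (\<Sum>j<N. rho (k - 1) j * (UpM N rho u k j + UpM N rho u k (Suc j)) * (uhat u k j - uhat u (k - 1) j)) / 2
    + (\<Sum>j<N - 1. (UpM N rho u k (Suc j))^2 * (uhat u k (Suc j) - uhat u k j)) / 2"
proof -
  obtain n where n: "N = Suc n" using N by (cases N) auto
  define F where "F = UpM N rho u k"
  define ub where "ub = uhat u k"
  define ub' where "ub' = uhat u (k - 1)"
  define G where "G = (\<lambda>j. rho k j * ub j - rho (k - 1) j * ub' j)"
  have F0: "F 0 = 0" and FN: "F (Suc n) = 0" unfolding F_def n by simp_all
  have "(\<Sum>i<n. F (i+1) * (qmom rho u k i - qmom rho u (k - 1) i)) = (\<Sum>i<n. F (i+1) * (G i + G (i+1))) / 2"
    unfolding sum_divide_distrib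
    by (rule sum.cong) (simp_all add: qmom_def G_def ub_def ub'_def field_simps)
  also have "(\<Sum>i<n. F (i+1) * (G i + G (i+1))) = (\<Sum>j<N. (F j + F (j+1)) * G j)"
    using sum_mult_adjacent_sum[OF F0 FN] n by simp
  also have "\<dots> = (\<Sum>j<N. rho (k - 1) j * (F j + F (Suc j)) * (ub j - ub' j) - ub j * ((F (Suc j))^2 - (F j)^2))"
  proof (rule sum.cong)
    fix j assume "j \<in> {..<N}"
    with mass have m: "rho k j = rho (k - 1) j - (F (Suc j) - F j)" by (auto simp: F_def)
    show "(F j + F (j+1)) * G j
      = rho (k - 1) j * (F j + F (Suc j)) * (ub j - ub' j) - ub j * ((F (Suc j))^2 - (F j)^2)"
      unfolding G_def m by (simp add: algebra_simps power2_eq_square)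
  qed simp
  also have "\<dots> = (\<Sum>j<N. rho (k - 1) j * (F j + F (Suc j)) * (ub j - ub' j))
      + (\<Sum>j<N. (F (j+1))^2 * (ub (j+1) - ub j))"
    using summation_by_parts[of "\<lambda>j. (F j)^2" N ub] F0 FN n by (simp add: sum_subtractf)
  also have "(\<Sum>j<N. (F (j+1))^2 * (ub (j+1) - ub j)) = (\<Sum>j<n. (F (j+1))^2 * (ub (j+1) - ub j))"
    using FN n by simp
  finally show ?thesis unfolding F_def ub_def ub'_def n by (simp add: add_divide_distrib)
qed

lemma upwind_sq_le: "(x * ppart v + y * npart v)^2 \<le> (x^2 + y^2) * (v::real)^2"
  by (cases "0 \<le> v") (simp_all add: ppart_def npart_def power_mult_distrib algebra_simps)

lemma sq_le_powr_mult_powr: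
  fixes r R g :: real
  assumes "0 < r" "r \<le> R" "g \<le> 2"
  shows "r^2 \<le> R powr (2 - g) * r powr g"
proof -
  have "r^2 = r powr (2 - g) * r powr g" using assms by (simp add: powr_add[symmetric] powr_numeral)
  also have "\<dots> \<le> R powr (2 - g) * r powr g"
    using assms by (intro mult_right_mono powr_mono2) auto
  finally show ?thesis .
qed

lemma node_velocity_sq_le:
  assumes "u k 0 = 0" "j \<le> N"
  shows "(u k j)^2 \<le> real N * velocity_dissipation N u k"
  using sq_le_mult_sum_sq_diff[of "u k" j N] assms unfolding velocity_dissipation_def by simp

lemma sum_UpM_sq_le:
  assumes bc: "u k 0 = 0"
  shows "(\<Sum>i<N - 1. (UpM N rho u k (Suc i))^2)
    \<le> 2 * (real N * velocity_dissipation N u k) * (\<Sum>j<N. (rho k j)^2)"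
proof -
  define US where "US = real N * velocity_dissipation N u k"
  have "(\<Sum>i<N - 1. (UpM N rho u k (Suc i))^2) \<le> (\<Sum>i<N - 1. US * ((rho k i)^2 + (rho k (Suc i))^2))"
  proof (rule sum_mono)
    fix i assume "i \<in> {..<N - 1}"
    hence "(UpM N rho u k (Suc i))^2 \<le> ((rho k i)^2 + (rho k (Suc i))^2) * (u k (Suc i))^2"
      unfolding UpM_def using upwind_sq_le by simp
    also have "\<dots> \<le> ((rho k i)^2 + (rho k (Suc i))^2) * US"
      using node_velocity_sq_le[of u k "Suc i" N, OF bc] \<open>i \<in> {..<N - 1}\<close> unfolding US_def
      by (intro mult_left_mono) auto
    finally show "(UpM N rho u k (Suc i))^2 \<le> US * ((rho k i)^2 + (rho k (Suc i))^2)"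
      by (simp add: mult.commute)
  qed
  also have "\<dots> = US * ((\<Sum>i<N - 1. (rho k i)^2) + (\<Sum>i<N - 1. (rho k (i+1))^2))"
    by (simp add: sum_distrib_left sum.distrib distrib_left)
  also have "\<dots> \<le> US * (2 * (\<Sum>j<N. (rho k j)^2))"
    using sum_shift_le_sum[of N "\<lambda>j. (rho k j)^2"] sum_mono2[of "{..<N}" "{..<N - 1}" "\<lambda>j. (rho k j)^2"]
    unfolding US_def velocity_dissipation_def by (intro mult_left_mono) (auto intro!: sum_nonneg mult_nonneg_nonneg)
  finally show ?thesis unfolding US_def by simp
qed

lemma sum_sq_UpM_adjacent_le:
  "(\<Sum>j<N. (UpM N rho u k j + UpM N rho u k (Suc j))^2) \<le> 4 * (\<Sum>i<N - 1. (UpM N rho u k (Suc i))^2)"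
proof -
  define F where "F = UpM N rho u k"
  have "(\<Sum>j<N. (F j + F (Suc j))^2) \<le> (\<Sum>j<N. 2 * (F j)^2 + 2 * (F (Suc j))^2)"
    by (intro sum_mono sq_add_le)
  also have "\<dots> = 2 * (\<Sum>j<N. (F j)^2) + 2 * (\<Sum>j<N. (F (Suc j))^2)"
    by (simp add: sum.distrib sum_distrib_left)
  also have "(\<Sum>j<N. (F j)^2) = (\<Sum>i<N - 1. (F (Suc i))^2)"
    by (cases N) (simp_all add: F_def sum.lessThan_Suc_shift del: sum.lessThan_Suc)
  also have "(\<Sum>j<N. (F (Suc j))^2) = (\<Sum>i<N - 1. (F (Suc i))^2)"
    by (cases N) (simp_all add: F_def)
  finally show ?thesis unfolding F_def by simp
qed

lemma dissipation_term_sq_le: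
  assumes g: "1 < g" "g < 2" and R: "0 < R"
    and pos: "\<forall>i<N. 0 < rho k i \<and> 0 < rho (k - 1) i"
    and bounded: "\<forall>i<N. rho k i \<le> R \<and> rho (k - 1) i \<le> R"
    and bc: "u k 0 = 0"
  shows "(\<Sum>j<N. rho (k - 1) j * (UpM N rho u k j + UpM N rho u k (Suc j)) * (uhat u k j - uhat u (k - 1) j))^2
     \<le> 8 * R powr (3 - g) * (real N * velocity_dissipation N u k) * (\<Sum>j<N. rho k j powr g)
       * time_dissipation N rho u k"
proof -
  define US where "US = real N * velocity_dissipation N u k"
  have US: "0 \<le> US" unfolding US_def velocity_dissipation_def by (simp add: sum_nonneg)
  have dd: "0 \<le> time_dissipation N rho u k"
    unfolding time_dissipation_def using pos by (auto intro!: sum_nonneg simp: less_imp_le)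
  have CS: "(\<Sum>j<N. rho (k - 1) j * (UpM N rho u k j + UpM N rho u k (Suc j)) * (uhat u k j - uhat u (k - 1) j))^2
      \<le> (\<Sum>j<N. rho (k - 1) j * (UpM N rho u k j + UpM N rho u k (Suc j))^2) * time_dissipation N rho u k"
    using weighted_Cauchy_Schwarz[of "{..<N}" "rho (k - 1)"] pos unfolding time_dissipation_def
    by (simp add: less_imp_le)
  have "(\<Sum>j<N. rho (k - 1) j * (UpM N rho u k j + UpM N rho u k (Suc j))^2)
      \<le> R * (\<Sum>j<N. (UpM N rho u k j + UpM N rho u k (Suc j))^2)"
    unfolding sum_distrib_left using bounded by (intro sum_mono mult_right_mono) auto
  also have "\<dots> \<le> R * (4 * (2 * US * (\<Sum>j<N. (rho k j)^2)))"
  proof -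
    have "(\<Sum>j<N. (UpM N rho u k j + UpM N rho u k (Suc j))^2) \<le> 4 * (2 * US * (\<Sum>j<N. (rho k j)^2))"
      using sum_sq_UpM_adjacent_le[of N rho u k] sum_UpM_sq_le[of u k N rho, OF bc] unfolding US_def
      by linarith
    thus ?thesis using R by (intro mult_left_mono) auto
  qed
  also have "\<dots> \<le> R * (4 * (2 * US * (R powr (2 - g) * (\<Sum>j<N. rho k j powr g))))"
    unfolding sum_distrib_left using pos bounded g R US sq_le_powr_mult_powr
    by (intro mult_left_mono sum_mono) auto
  also have "\<dots> = 8 * (R * R powr (2 - g)) * US * (\<Sum>j<N. rho k j powr g)"
    by (simp add: algebra_simps)
  also have "R * R powr (2 - g) = R powr (3 - g)"
    using R powr_add[of R 1 "2 - g"] by simp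
  finally have "(\<Sum>j<N. rho (k - 1) j * (UpM N rho u k j + UpM N rho u k (Suc j))^2)
      \<le> 8 * R powr (3 - g) * US * (\<Sum>j<N. rho k j powr g)" .
  from CS mult_right_mono[OF this dd] show ?thesis unfolding US_def by simp
qed

lemma sum_sq_diff_uhat_le:
  "(\<Sum>j<N - 1. (uhat u k (Suc j) - uhat u k j)^2) \<le> velocity_dissipation N u k"
proof -
  define d where "d = (\<lambda>j. u k (Suc j) - u k j)"
  have "(\<Sum>j<N - 1. (uhat u k (Suc j) - uhat u k j)^2) \<le> (\<Sum>j<N - 1. ((d (j+1))^2 + (d j)^2) / 2)"
  proof (rule sum_mono)
    fix j
    have "(uhat u k (Suc j) - uhat u k j)^2 = (d (j+1) + d j)^2 / 4"
      unfolding uhat_def d_def by (simp add: power_divide field_simps power2_eq_square)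
    thus "(uhat u k (Suc j) - uhat u k j)^2 \<le> ((d (j+1))^2 + (d j)^2) / 2"
      using sq_add_le[of "d (j+1)" "d j"] by simp
  qed
  also have "\<dots> = ((\<Sum>j<N - 1. (d (j+1))^2) + (\<Sum>j<N - 1. (d j)^2)) / 2"
    by (simp add: sum.distrib add_divide_distrib[symmetric] sum_divide_distrib[symmetric])
  also have "\<dots> \<le> (velocity_dissipation N u k + velocity_dissipation N u k) / 2"
    using sum_shift_le_sum[of N "\<lambda>j. (d j)^2"] sum_mono2[of "{..<N}" "{..<N - 1}" "\<lambda>j. (d j)^2"]
    unfolding velocity_dissipation_def d_def by (intro divide_right_mono add_mono) auto
  finally show ?thesis by simp
qed

lemma weighted_sq_shift_le:
  fixes r R x y :: real
  assumes "0 \<le> r" "r \<le> R"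
  shows "r * (x + y / 2)^2 \<le> 2 * (r * x^2) + R / 2 * y^2"
proof -
  have "r * (x + y / 2)^2 \<le> r * (2 * x^2 + y^2 / 2)"
    using sq_add_le[of x "y / 2"] assms by (intro mult_left_mono) (auto simp: power_divide)
  also have "\<dots> \<le> 2 * (r * x^2) + R / 2 * y^2"
    using mult_right_mono[OF assms(2), of "y^2 / 2"] by (simp add: algebra_simps)
  finally show ?thesis .
qed

text \<open>Each node value is a cell average \<open>uhat\<close>, seen by the kinetic energy, plus half a
  velocity difference, seen by the velocity dissipation.\<close>
lemma sum_node_velocity_sq_le:
  assumes R: "0 \<le> R" and pos: "\<forall>i<N. 0 < rho k i \<and> rho k i \<le> R"
  shows "(\<Sum>j<N - 1. (rho k j + rho k (Suc j)) * (u k (Suc j))^2)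
    \<le> 4 * kinetic_energy N rho u k + R * velocity_dissipation N u k"
proof -
  define r where "r = rho k"
  define ub where "ub = uhat u k"
  define d where "d = (\<lambda>j. u k (Suc j) - u k j)"
  have "(\<Sum>j<N - 1. (r j + r (Suc j)) * (u k (Suc j))^2)
      \<le> (\<Sum>j<N - 1. 2 * (r j * (ub j)^2) + R / 2 * (d j)^2 + (2 * (r (j+1) * (ub (j+1))^2) + R / 2 * (d (j+1))^2))"
  proof (rule sum_mono)
    fix j assume "j \<in> {..<N - 1}"
    hence rj: "0 \<le> r j" "r j \<le> R" "0 \<le> r (Suc j)" "r (Suc j) \<le> R"
      using pos unfolding r_def by (auto simp: less_imp_le)
    have "u k (Suc j) = ub j + d j / 2" "u k (Suc j) = ub (j+1) + (- d (j+1)) / 2"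
      unfolding ub_def d_def uhat_def by (simp_all add: field_simps)
    thus "(r j + r (Suc j)) * (u k (Suc j))^2
      \<le> 2 * (r j * (ub j)^2) + R / 2 * (d j)^2 + (2 * (r (j+1) * (ub (j+1))^2) + R / 2 * (d (j+1))^2)"
      using weighted_sq_shift_le[OF rj(1,2), of "ub j" "d j"]
        weighted_sq_shift_le[OF rj(3,4), of "ub (j+1)" "- d (j+1)"]
      by (simp add: distrib_right)
  qed
  also have "\<dots> = 2 * ((\<Sum>j<N - 1. r j * (ub j)^2) + (\<Sum>j<N - 1. r (j+1) * (ub (j+1))^2))
      + R / 2 * ((\<Sum>j<N - 1. (d j)^2) + (\<Sum>j<N - 1. (d (j+1))^2))"
    by (simp add: sum.distrib sum_distrib_left algebra_simps)
  also have "\<dots> \<le> 2 * (2 * kinetic_energy N rho u k) + R / 2 * (2 * velocity_dissipation N u k)"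
  proof -
    have nn: "\<And>j. j < N \<Longrightarrow> 0 \<le> r j * (ub j)^2" using pos unfolding r_def by (simp add: less_imp_le)
    have "(\<Sum>j<N - 1. r j * (ub j)^2) + (\<Sum>j<N - 1. r (j+1) * (ub (j+1))^2) \<le> 2 * kinetic_energy N rho u k"
      using sum_shift_le_sum[of N "\<lambda>j. r j * (ub j)^2"] sum_mono2[of "{..<N}" "{..<N - 1}" "\<lambda>j. r j * (ub j)^2"] nn
      unfolding kinetic_energy_def r_def ub_def by auto
    moreover have "(\<Sum>j<N - 1. (d j)^2) + (\<Sum>j<N - 1. (d (j+1))^2) \<le> 2 * velocity_dissipation N u k"
      using sum_shift_le_sum[of N "\<lambda>j. (d j)^2"] sum_mono2[of "{..<N}" "{..<N - 1}" "\<lambda>j. (d j)^2"]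
      unfolding velocity_dissipation_def d_def by auto
    ultimately show ?thesis using R by (intro add_mono mult_left_mono) auto
  qed
  finally show ?thesis unfolding r_def by simp
qed

lemma flux_term_sq_le:
  assumes R: "0 < R" and pos: "\<forall>i<N. 0 < rho k i \<and> rho k i \<le> R" and bc: "u k 0 = 0"
  shows "(\<Sum>j<N - 1. (UpM N rho u k (Suc j))^2 * (uhat u k (Suc j) - uhat u k j))^2
     \<le> 2 * R^3 * (real N * velocity_dissipation N u k)
       * (4 * kinetic_energy N rho u k + R * velocity_dissipation N u k) * velocity_dissipation N u k"
proof -
  define US where "US = real N * velocity_dissipation N u k"
  define W where "W = (\<lambda>j. (rho k j + rho k (Suc j)) * (u k (Suc j))^2)"
  have "((UpM N rho u k (Suc j))^2)^2 \<le> 2 * R^3 * US * W j" if j: "j < N - 1" for j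
  proof -
    have rj: "0 < rho k j" "rho k j \<le> R" "0 < rho k (Suc j)" "rho k (Suc j) \<le> R" using pos j by auto
    have W0: "0 \<le> W j" unfolding W_def using rj by simp
    have "(UpM N rho u k (Suc j))^2 \<le> ((rho k j)^2 + (rho k (Suc j))^2) * (u k (Suc j))^2"
      unfolding UpM_def using j upwind_sq_le by simp
    also have "\<dots> \<le> R * W j"
      unfolding W_def power2_eq_square using rj
      by (simp add: algebra_simps add_mono mult_right_mono mult_mono)
    finally have FW: "(UpM N rho u k (Suc j))^2 \<le> R * W j" .
    have "W j \<le> (R + R) * US" unfolding W_def US_def
      using rj node_velocity_sq_le[of u k "Suc j" N, OF bc] j by (intro mult_mono add_mono) auto
    have "((UpM N rho u k (Suc j))^2)^2 \<le> (R * W j)^2" using FW by (intro power_mono) auto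
    also have "\<dots> = R^2 * W j * W j" by (simp add: power2_eq_square)
    also have "\<dots> \<le> R^2 * W j * ((R + R) * US)" using \<open>W j \<le> (R + R) * US\<close> W0 by (intro mult_left_mono) auto
    finally show ?thesis by (simp add: power2_eq_square power3_eq_cube algebra_simps)
  qed
  hence "(\<Sum>j<N - 1. ((UpM N rho u k (Suc j))^2)^2) \<le> 2 * R^3 * US * (\<Sum>j<N - 1. W j)"
    unfolding sum_distrib_left by (intro sum_mono) auto
  also have "\<dots> \<le> 2 * R^3 * US * (4 * kinetic_energy N rho u k + R * velocity_dissipation N u k)"
    using sum_node_velocity_sq_le[of R N rho k u, OF less_imp_le[OF R] pos] R unfolding W_def US_def velocity_dissipation_def
    by (intro mult_left_mono) (auto intro!: mult_nonneg_nonneg sum_nonneg)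
  finally have F4: "(\<Sum>j<N - 1. ((UpM N rho u k (Suc j))^2)^2)
      \<le> 2 * R^3 * US * (4 * kinetic_energy N rho u k + R * velocity_dissipation N u k)" .
  have "(\<Sum>j<N - 1. (UpM N rho u k (Suc j))^2 * (uhat u k (Suc j) - uhat u k j))^2
      \<le> (\<Sum>j<N - 1. ((UpM N rho u k (Suc j))^2)^2) * (\<Sum>j<N - 1. (uhat u k (Suc j) - uhat u k j)^2)"
    by (rule Cauchy_Schwarz_ineq_sum)
  also have "\<dots> \<le> 2 * R^3 * US * (4 * kinetic_energy N rho u k + R * velocity_dissipation N u k)
      * velocity_dissipation N u k"
  proof (rule mult_mono[OF F4 sum_sq_diff_uhat_le])
    show "0 \<le> 2 * R^3 * US * (4 * kinetic_energy N rho u k + R * velocity_dissipation N u k)"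
      by (rule order_trans[OF sum_nonneg F4]) simp
  qed (simp add: sum_nonneg)
  finally show ?thesis unfolding US_def by simp
qed

lemma abs_le_sqrt_mult: "(x::real)^2 \<le> c * y \<Longrightarrow> \<bar>x\<bar> \<le> sqrt c * sqrt y"
  by (metis real_sqrt_abs real_sqrt_le_mono real_sqrt_mult)

lemma E1_summand_abs_le:
  assumes N: "1 \<le> N" and g: "1 < g" "g < 2" and R: "0 < R"
    and step: "scheme_step N h mu a g rho u k"
    and bounded: "\<forall>i<N. rho k i \<le> R \<and> rho (k - 1) i \<le> R"
    and P: "(\<Sum>j<N. rho k j powr g) \<le> P"
    and Q: "4 * kinetic_energy N rho u k + R * velocity_dissipation N u k \<le> Q"
  shows "\<bar>\<Sum>i<N - 1. UpM N rho u k (Suc i) * (qmom rho u k i - qmom rho u (k - 1) i)\<bar>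
    \<le> (sqrt (8 * R powr (3 - g) * real N * P)
          * sqrt (velocity_dissipation N u k * time_dissipation N rho u k)
        + sqrt (2 * R^3 * real N * Q) * velocity_dissipation N u k) / 2"
proof -
  define S where "S = velocity_dissipation N u k"
  define D where "D = time_dissipation N rho u k"
  define A where "A = (\<Sum>j<N. rho (k - 1) j * (UpM N rho u k j + UpM N rho u k (Suc j))
                            * (uhat u k j - uhat u (k - 1) j))"
  define B where "B = (\<Sum>j<N - 1. (UpM N rho u k (Suc j))^2 * (uhat u k (Suc j) - uhat u k j))"
  from step have pos: "\<forall>i<N. 0 < rho k i \<and> 0 < rho (k - 1) i" and bc: "u k 0 = 0"
    and mass: "\<forall>i<N. rho k i - rho (k - 1) i = UpM N rho u k i - UpM N rho u k (Suc i)"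
    unfolding scheme_step_def by blast+
  have S: "0 \<le> S" unfolding S_def velocity_dissipation_def by (simp add: sum_nonneg)
  have D: "0 \<le> D" unfolding D_def time_dissipation_def using pos by (auto intro!: sum_nonneg simp: less_imp_le)
  have KE: "0 \<le> kinetic_energy N rho u k"
    unfolding kinetic_energy_def using pos by (auto intro!: sum_nonneg simp: less_imp_le)
  have "A^2 \<le> 8 * R powr (3 - g) * (real N * S) * (\<Sum>j<N. rho k j powr g) * D"
    using dissipation_term_sq_le[where rho=rho and k=k and u=u and N=N, OF g R pos bounded bc]
    unfolding A_def S_def D_def by simp
  also have "\<dots> \<le> 8 * R powr (3 - g) * (real N * S) * P * D"
    using P S D by (intro mult_right_mono mult_left_mono) auto
  finally have absA: "\<bar>A\<bar> \<le> sqrt (8 * R powr (3 - g) * real N * P) * sqrt (S * D)"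
    by (intro abs_le_sqrt_mult) (simp add: algebra_simps)
  have "B^2 \<le> 2 * R^3 * (real N * S) * (4 * kinetic_energy N rho u k + R * S) * S"
    using flux_term_sq_le[where rho=rho and k=k and u=u and N=N, OF R _ bc] pos bounded
    unfolding B_def S_def by simp
  also have "\<dots> \<le> 2 * R^3 * (real N * S) * Q * S"
    using Q R S unfolding S_def by (intro mult_right_mono mult_left_mono) auto
  finally have absB: "\<bar>B\<bar> \<le> sqrt (2 * R^3 * real N * Q) * S"
    using abs_le_sqrt_mult[of B "2 * R^3 * real N * Q" "S^2"] S by (simp add: algebra_simps power2_eq_square)
  have split: "(\<Sum>i<N - 1. UpM N rho u k (Suc i) * (qmom rho u k i - qmom rho u (k - 1) i)) = A / 2 + B / 2"
    unfolding A_def B_def by (rule E1_summand_decomposition[OF N mass])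
  have "\<bar>\<Sum>i<N - 1. UpM N rho u k (Suc i) * (qmom rho u k i - qmom rho u (k - 1) i)\<bar>
      \<le> \<bar>A\<bar> / 2 + \<bar>B\<bar> / 2"
    unfolding split using abs_triangle_ineq[of "A / 2" "B / 2"] by simp
  also have "\<dots> \<le> sqrt (8 * R powr (3 - g) * real N * P) * sqrt (S * D) / 2
      + sqrt (2 * R^3 * real N * Q) * S / 2"
    using absA absB by (intro add_mono divide_right_mono) auto
  finally show ?thesis unfolding S_def D_def by (simp add: add_divide_distrib)
qed

section \<open>Summation over time\<close>

lemma sum_abs_le_of_summand_le:
  fixes T S D :: "nat \<Rightarrow> real"
  assumes T: "\<And>k. k \<in> A \<Longrightarrow> \<bar>T k\<bar> \<le> (cA * sqrt (S k * D k) + cB * S k) / 2"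
    and nonneg: "\<And>k. k \<in> A \<Longrightarrow> 0 \<le> S k \<and> 0 \<le> D k" and c: "0 \<le> cA" "0 \<le> cB" and h: "0 < h"
    and S: "sum S A \<le> \<sigma>" and D: "sum D A \<le> \<delta>"
  shows "(\<Sum>k\<in>A. \<bar>T k\<bar>) \<le> cA / 4 * (\<sigma> / sqrt h + sqrt h * \<delta>) + cB / 2 * \<sigma>"
proof -
  have pointwise: "\<bar>T k\<bar> \<le> (cA * ((S k / sqrt h + sqrt h * D k) / 2) + cB * S k) / 2" if k: "k \<in> A" for k
  proof -
    have "sqrt (S k * D k) \<le> (S k / sqrt h + sqrt h * D k) / 2"
      using arith_geo_mean_sqrt[of "S k / sqrt h" "sqrt h * D k"] nonneg[OF k] h by simp
    hence "cA * sqrt (S k * D k) + cB * S k \<le> cA * ((S k / sqrt h + sqrt h * D k) / 2) + cB * S k"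
      using c by (intro add_right_mono mult_left_mono)
    from order_trans[OF T[OF k] divide_right_mono[OF this]] show ?thesis by simp
  qed
  hence "(\<Sum>k\<in>A. \<bar>T k\<bar>) \<le> (\<Sum>k\<in>A. (cA * ((S k / sqrt h + sqrt h * D k) / 2) + cB * S k) / 2)"
    by (rule sum_mono)
  also have "\<dots> = (\<Sum>k\<in>A. cA / (4 * sqrt h) * S k + cA * sqrt h / 4 * D k + cB / 2 * S k)"
    by (rule sum.cong) (simp_all add: field_simps)
  also have "\<dots> = cA / (4 * sqrt h) * sum S A + cA * sqrt h / 4 * sum D A + cB / 2 * sum S A"
    by (simp add: sum.distrib sum_distrib_left)
  also have "\<dots> = cA / 4 * (sum S A / sqrt h + sqrt h * sum D A) + cB / 2 * sum S A"
    by (simp add: field_simps)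
  also have "\<dots> \<le> cA / 4 * (\<sigma> / sqrt h + sqrt h * \<delta>) + cB / 2 * \<sigma>"
    using S D c h by (intro add_mono mult_left_mono divide_right_mono) auto
  finally show ?thesis .
qed

lemma density_bound_scaling:
  fixes h K g :: real
  assumes h: "0 < h" and K: "0 < K" and g: "0 < g"
  defines "R \<equiv> (K / h) powr (1 / g)"
  shows "sqrt h * sqrt (R powr (3 - g)) = K powr ((3 - g) / (2 * g)) * h powr ((2 * g - 3) / (2 * g))"
    and "h * sqrt (R^3) = K powr (3 / (2 * g)) * h powr ((2 * g - 3) / (2 * g))"
proof -
  have "sqrt (R powr (3 - g)) = (K / h) powr ((3 - g) / (2 * g))"
    unfolding R_def using h K by (simp add: powr_half_sqrt_powr[symmetric] powr_powr mult.commute)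
  also have "\<dots> = K powr ((3 - g) / (2 * g)) / h powr ((3 - g) / (2 * g))"
    using h K by (simp add: powr_divide)
  finally have 1: "sqrt (R powr (3 - g)) = K powr ((3 - g) / (2 * g)) / h powr ((3 - g) / (2 * g))" .
  have "sqrt h / h powr ((3 - g) / (2 * g)) = h powr (1 / 2 - (3 - g) / (2 * g))"
    using h by (simp add: powr_diff powr_half_sqrt)
  also have "1 / 2 - (3 - g) / (2 * g) = (2 * g - 3) / (2 * g)" using g by (simp add: field_simps)
  finally have 3: "sqrt h / h powr ((3 - g) / (2 * g)) = h powr ((2 * g - 3) / (2 * g))" .
  show "sqrt h * sqrt (R powr (3 - g)) = K powr ((3 - g) / (2 * g)) * h powr ((2 * g - 3) / (2 * g))"
    unfolding 1 3[symmetric] by (simp add: ac_simps)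
  have "sqrt (R^3) = (K / h) powr (3 / (2 * g))"
    unfolding R_def using h K powr_half_sqrt_powr[of "(K / h) powr (1 / g)" 3]
    by (simp add: powr_powr powr_numeral[symmetric] mult.commute)
  also have "\<dots> = K powr (3 / (2 * g)) / h powr (3 / (2 * g))"
    using h K by (simp add: powr_divide)
  finally have 2: "sqrt (R^3) = K powr (3 / (2 * g)) / h powr (3 / (2 * g))" .
  have "h / h powr (3 / (2 * g)) = h powr (1 - 3 / (2 * g))"
    using h by (simp add: powr_diff)
  also have "1 - 3 / (2 * g) = (2 * g - 3) / (2 * g)" using g by (simp add: field_simps)
  finally have 4: "h / h powr (3 / (2 * g)) = h powr ((2 * g - 3) / (2 * g))" .
  show "h * sqrt (R^3) = K powr (3 / (2 * g)) * h powr ((2 * g - 3) / (2 * g))"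
    unfolding 2 4[symmetric] by (simp add: ac_simps)
qed

text \<open>Here \<open>E / h\<close> bounds the energy and \<open>K / h\<close> the sum of \<open>\<rho> powr g\<close>.\<close>
definition E1_constant :: "real \<Rightarrow> real \<Rightarrow> real \<Rightarrow> real \<Rightarrow> real \<Rightarrow> real" where
  "E1_constant L mu g E K =
     sqrt (8 * L * K) * (E / mu + 2 * E) / 4 * K powr ((3 - g) / (2 * g))
     + sqrt (2 * L * (8 * E + K powr (1 / g) * E / mu)) * E / (2 * mu) * K powr (3 / (2 * g))"

lemma E1_constant_pos:
  assumes "0 < L" "0 < mu" "0 < E" "0 < K"
  shows "0 < E1_constant L mu g E K"
proof -
  have "0 < sqrt (8 * L * K) * (E / mu + 2 * E) / 4 * K powr ((3 - g) / (2 * g))"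
    using assms by (intro divide_pos_pos mult_pos_pos add_pos_pos) auto
  moreover have "0 \<le> sqrt (2 * L * (8 * E + K powr (1 / g) * E / mu)) * E / (2 * mu) * K powr (3 / (2 * g))"
    using assms by simp
  ultimately show ?thesis unfolding E1_constant_def by linarith
qed

lemma E1_constant_scaling:
  fixes h K g E mu :: real
  assumes h: "0 < h" and K: "0 < K" and g: "0 < g" and mu: "0 < mu" and Nh: "real N * h = L"
  defines "R \<equiv> (K / h) powr (1 / g)"
  defines "Q \<equiv> 8 * E + K powr (1 / g) * E / mu"
  shows "h * h * (sqrt (8 * R powr (3 - g) * real N * (K / h)) / 4 * (E / mu / sqrt h + sqrt h * (2 * E / h))
           + sqrt (2 * R^3 * real N * (Q / h)) / 2 * (E / mu))
    = E1_constant L mu g E K * h powr ((2 * g - 3) / (2 * g))"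
proof -
  define s where "s = sqrt h"
  have s: "0 < s" "h = s * s" unfolding s_def using h by simp_all
  have sq: "sqrt (c * real N * (X / h)) = sqrt (c * L * X) / h" for c X
  proof -
    have "c * real N * (X / h) = c * L * X / h^2" using Nh h by (simp add: field_simps power2_eq_square)
    thus ?thesis using h by (simp add: real_sqrt_divide)
  qed
  have cA: "sqrt (8 * R powr (3 - g) * real N * (K / h)) = sqrt (8 * L * K) * sqrt (R powr (3 - g)) / h"
    using sq[of "8 * R powr (3 - g)" K] by (simp add: real_sqrt_mult ac_simps)
  have cB: "sqrt (2 * R^3 * real N * (Q / h)) = sqrt (2 * L * Q) * sqrt (R^3) / h"
    using sq[of "2 * R^3" Q] by (simp add: real_sqrt_mult ac_simps)
  have "h * h * (sqrt (8 * R powr (3 - g) * real N * (K / h)) / 4 * (E / mu / sqrt h + sqrt h * (2 * E / h))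
           + sqrt (2 * R^3 * real N * (Q / h)) / 2 * (E / mu))
      = (sqrt h * sqrt (R powr (3 - g))) * (sqrt (8 * L * K) * (E / mu + 2 * E) / 4)
        + (h * sqrt (R^3)) * (sqrt (2 * L * Q) * E / (2 * mu))"
    unfolding cA cB unfolding s_def[symmetric] s(2) using s mu by (simp add: field_simps)
  thus ?thesis
    unfolding density_bound_scaling[OF h K g, folded R_def] E1_constant_def Q_def
    by (simp add: algebra_simps)
qed

lemma density_bound_mult_le:
  fixes K h g S :: real
  assumes K: "0 < K" and h: "0 < h" "h < 1" and g: "1 < g" and S: "0 \<le> S" "S \<le> B"
  shows "(K / h) powr (1 / g) * S \<le> K powr (1 / g) * B / h"
proof -
  have "(K / h) powr (1 / g) * h = K powr (1 / g) * h powr (1 - 1 / g)"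
    using K h by (simp add: powr_divide powr_diff)
  also have "\<dots> \<le> K powr (1 / g)"
    using K h g mult_left_mono[of "h powr (1 - 1 / g)" 1 "K powr (1 / g)"] by (simp add: powr_le1)
  finally have "(K / h) powr (1 / g) * h * S \<le> K powr (1 / g) * B"
    using S by (intro mult_mono) auto
  thus ?thesis using h by (simp add: field_simps)
qed

lemma E1_abs_le:
  assumes N: "1 \<le> N" and g: "1 < g" "g < 2" and a: "0 < a" and mu: "0 < mu"
    and h: "0 < h" "h < 1" and Nh: "real N * h = L" and E: "0 < E"
    and steps: "\<forall>k\<in>{1..M}. scheme_step N h mu a g rho u k"
    and pos: "\<forall>k\<le>M. \<forall>i<N. 0 < rho k i"
    and init: "kinetic_energy N rho u 0 / 2 + internal_energy a g N rho 0 \<le> E / h"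
    and m: "m \<in> {1..M}"
  shows "\<bar>E1 h h N rho u m\<bar> \<le> E1_constant L mu g E ((g - 1) * E / a) * h powr ((2 * g - 3) / (2 * g))"
proof -
  define K where "K = (g - 1) * E / a"
  define R where "R = (K / h) powr (1 / g)"
  define Q where "Q = 8 * E + K powr (1 / g) * E / mu"
  define cA where "cA = sqrt (8 * R powr (3 - g) * real N * (K / h))"
  define cB where "cB = sqrt (2 * R^3 * real N * (Q / h))"
  define T where "T = (\<lambda>k. \<Sum>i<N - 1. UpM N rho u k (Suc i) * (qmom rho u k i - qmom rho u (k - 1) i))"
  note energy = energy_consequences[OF N g(1) a h(1) mu steps pos init]
  have K: "0 < K" unfolding K_def using g a E by simp
  have P: "(\<Sum>j<N. rho k j powr g) \<le> K / h" if "k \<le> M" for k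
    using energy(4)[OF that] unfolding K_def by (simp add: mult.commute)
  have R: "0 < R" unfolding R_def using K h by simp
  have Q: "0 < Q" unfolding Q_def using K E mu by (simp add: add_pos_nonneg)
  have bounded: "rho k i \<le> R" if "k \<le> M" "i < N" for k i
    using le_powr_inverse_of_sum_powr_le[OF _ P[OF that(1)] that(2)] pos that g unfolding R_def by auto
  have T_bound: "\<bar>T k\<bar> \<le> (cA * sqrt (velocity_dissipation N u k * time_dissipation N rho u k)
      + cB * velocity_dissipation N u k) / 2" if k: "k \<in> {1..M}" for k
  proof -
    have S: "velocity_dissipation N u k \<le> E / mu"
      using energy(1) member_le_sum[OF k, of "velocity_dissipation N u"] k
      unfolding velocity_dissipation_def by (simp add: sum_nonneg)
    have "R * velocity_dissipation N u k \<le> K powr (1 / g) * (E / mu) / h"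
      using density_bound_mult_le[OF K h g(1) _ S] unfolding R_def velocity_dissipation_def
      by (simp add: sum_nonneg)
    hence "4 * kinetic_energy N rho u k + R * velocity_dissipation N u k \<le> Q / h"
      using energy(3)[of k] k unfolding Q_def by (simp add: add_divide_distrib)
    with R show ?thesis
      unfolding T_def cA_def cB_def using k steps bounded P
      by (intro E1_summand_abs_le[OF N g]) auto
  qed
  have "\<bar>E1 h h N rho u m\<bar> = h * h * \<bar>\<Sum>k\<in>{1..m}. T k\<bar>"
    unfolding E1_def T_def using h by (simp add: abs_mult)
  also have "\<dots> \<le> h * h * (\<Sum>k\<in>{1..M}. \<bar>T k\<bar>)"
    using m by (intro mult_left_mono order_trans[OF sum_abs sum_mono2]) auto
  also have "\<dots> \<le> h * h * (cA / 4 * (E / mu / sqrt h + sqrt h * (2 * E / h)) + cB / 2 * (E / mu))"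
  proof (intro mult_left_mono sum_abs_le_of_summand_le[OF T_bound _ _ _ h(1) energy(1,2)])
    show "0 \<le> velocity_dissipation N u k \<and> 0 \<le> time_dissipation N rho u k" if "k \<in> {1..M}" for k
      using that pos unfolding velocity_dissipation_def time_dissipation_def
      by (auto intro!: sum_nonneg mult_nonneg_nonneg simp: less_imp_le)
  qed (use K R Q h in \<open>simp_all add: cA_def cB_def\<close>)
  also have "\<dots> = E1_constant L mu g E K * h powr ((2 * g - 3) / (2 * g))"
    unfolding cA_def cB_def R_def Q_def using g mu by (intro E1_constant_scaling[OF h(1) K _ _ Nh]) auto
  finally show ?thesis unfolding K_def .
qed

lemma numsol_scheme_step:
  assumes sol: "numsol L T mu a g rho0 u0 N M rho u"
    and dt: "T / real M = L / real N" and h: "0 < L / real N" and k: "k \<in> {1..M}"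
  shows "scheme_step N (L / real N) mu a g rho u k"
proof -
  define h where "h = L / real N"
  have "k - 1 \<in> {0..M}" using k by auto
  with sol k have pos: "\<forall>i<N. 0 < rho k i \<and> 0 < rho (k - 1) i" and bc: "u k 0 = 0 \<and> u k N = 0"
    and mass: "\<forall>i<N. (rho k i - rho (k - 1) i) / h + (UpM N rho u k (Suc i) - UpM N rho u k i) / h = 0"
    and mom: "\<forall>i<N - 1. (qmom rho u k i - qmom rho u (k - 1) i) / h
          + (UpQ N rho u k (i + 2) - UpQ N rho u k i) / (2 * h)
          = mu * (u k i - 2 * u k (Suc i) + u k (i + 2)) / h\<^sup>2
            - (pressure a g (rho k (Suc i)) - pressure a g (rho k i)) / h"
    unfolding numsol_def Let_def dt h_def by auto
  have cancel_mass: "X + Y = 0" if "X / h + Y / h = 0" for X Y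
    using that h unfolding h_def[symmetric] by (simp add: add_divide_distrib[symmetric])
  have cancel_mom: "X + Y / 2 = mu / h * Z - P" if "X / h + Y / (2 * h) = mu * Z / h\<^sup>2 - P / h" for X Y Z P
  proof -
    have "h * (X / h + Y / (2 * h)) = X + Y / 2" "h * (mu * Z / h\<^sup>2 - P / h) = mu / h * Z - P"
      using h unfolding h_def[symmetric] by (simp_all add: field_simps power2_eq_square)
    with that show ?thesis by metis
  qed
  have "rho k i - rho (k - 1) i = UpM N rho u k i - UpM N rho u k (Suc i)" if "i < N" for i
    using cancel_mass[OF mass[rule_format, OF that]] by simp
  moreover have "qmom rho u k i - qmom rho u (k - 1) i + (UpQ N rho u k (i + 2) - UpQ N rho u k i) / 2
      = mu / h * (u k i - 2 * u k (Suc i) + u k (i + 2))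
        - (pressure a g (rho k (Suc i)) - pressure a g (rho k i))" if "i < N - 1" for i
    using cancel_mom[OF mom[rule_format, OF that]] .
  ultimately show ?thesis using pos bc unfolding scheme_step_def h_def[symmetric] by blast
qed

lemma numsol_initial_energy_le:
  assumes L: "0 < L" and g: "1 < g" and a: "0 < a" and N: "1 \<le> N"
    and meas: "set_borel_measurable lborel {0..L} rho0"
    and int: "set_integrable lborel {0..L} (\<lambda>x. \<bar>rho0 x\<bar> powr g)"
    and rho0_pos: "\<forall>x\<in>{0<..<L}. 0 < rho0 x"
    and B0: "\<forall>x\<in>{0..L}. \<bar>u0 x\<bar> \<le> B0"
    and sol: "numsol L T mu a g rho0 u0 N M rho u"
  defines "I \<equiv> LBINT x = 0..L. \<bar>rho0 x\<bar> powr g"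
  shows "kinetic_energy N rho u 0 / 2 + internal_energy a g N rho 0
    \<le> (B0^2 / 2 * (L + I) + a / (g - 1) * I) / (L / real N)"
proof (rule initial_energy_le)
  show "\<forall>j\<le>N. u 0 j = u0 (real j * (L / real N))"
    using sol unfolding numsol_def Let_def by blast
  have "\<forall>k\<in>{0..M}. \<forall>i<N. 0 < rho k i"
    using sol unfolding numsol_def Let_def by blast
  thus pos: "\<forall>i<N. 0 < rho 0 i" by simp
  have "\<forall>i<N. rho 0 i = (1 / (L / real N))
      * (LBINT x = real i * (L / real N)..real (Suc i) * (L / real N). rho0 x)"
    using sol unfolding numsol_def Let_def by blast
  from cell_averages_powr_sum_le[OF L _ N refl meas int rho0_pos this pos] g
  show "(\<Sum>j<N. rho 0 j powr g) \<le> I / (L / real N)" unfolding I_def by simp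
qed (use L N g a B0 in auto)

lemma numsol_E1_abs_le:
  assumes L: "0 < L" and g: "1 < g" "g < 2" and a: "0 < a" and mu: "0 < mu"
    and rho0: "set_borel_measurable lborel {0..L} rho0"
      "set_integrable lborel {0..L} (\<lambda>x. \<bar>rho0 x\<bar> powr g)" "\<forall>x\<in>{0<..<L}. 0 < rho0 x"
    and B0: "\<forall>x\<in>{0..L}. \<bar>u0 x\<bar> \<le> B0"
    and E: "B0^2 / 2 * (L + (LBINT x = 0..L. \<bar>rho0 x\<bar> powr g))
              + a / (g - 1) * (LBINT x = 0..L. \<bar>rho0 x\<bar> powr g) \<le> E" "0 < E"
    and N: "1 \<le> N" and dt: "T / real M = L / real N" and small: "L / real N < 1"
    and sol: "numsol L T mu a g rho0 u0 N M rho u" and m: "m \<in> {1..M}"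
  shows "\<bar>E1 (T / real M) (L / real N) N rho u m\<bar>
    \<le> E1_constant L mu g E ((g - 1) * E / a) * (L / real N) powr ((2 * g - 3) / (2 * g))"
proof -
  define h where "h = L / real N"
  have h: "0 < h" "real N * h = L" using L N unfolding h_def by auto
  have "kinetic_energy N rho u 0 / 2 + internal_energy a g N rho 0
      \<le> (B0^2 / 2 * (L + (LBINT x = 0..L. \<bar>rho0 x\<bar> powr g))
          + a / (g - 1) * (LBINT x = 0..L. \<bar>rho0 x\<bar> powr g)) / h"
    using numsol_initial_energy_le[OF L g(1) a N rho0 B0 sol] unfolding h_def .
  also have "\<dots> \<le> E / h" using E(1) h(1) by (rule divide_right_mono[OF _ less_imp_le])
  finally have init: "kinetic_energy N rho u 0 / 2 + internal_energy a g N rho 0 \<le> E / h" .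
  have steps: "\<forall>k\<in>{1..M}. scheme_step N h mu a g rho u k"
    using numsol_scheme_step[OF sol dt] h unfolding h_def by auto
  have pos: "\<forall>k\<le>M. \<forall>i<N. 0 < rho k i" using sol unfolding numsol_def Let_def by auto
  show ?thesis
    using E1_abs_le[OF N g a mu h(1) _ h(2) E(2) steps pos init m] small unfolding dt h_def by simp
qed

theorem lemma4p4:
  fixes L T mu a gam :: real and rho0 u0 :: "real \<Rightarrow> real"
  assumes "L > 0" "T > 0" "mu > 0" "a > 0"
    and "3 / 2 < gam" "gam < 2"
    and "set_borel_measurable lborel {0..L} rho0"
    and "set_integrable lborel {0..L} (\<lambda>x. \<bar>rho0 x\<bar> powr gam)"
    and "\<forall>x\<in>{0<..<L}. rho0 x > 0"
    and "\<exists>B. \<forall>x\<in>{0..L}. \<bar>u0 x\<bar> \<le> B"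
  shows "\<exists>C > 0. \<forall>N M rho u. N \<ge> 1 \<and> M \<ge> 1 \<and> L / real N = T / real M \<and> L / real N < 1
           \<and> numsol L T mu a gam rho0 u0 N M rho u \<longrightarrow>
           (\<forall>m\<in>{1..M}. \<bar>E1 (T / real M) (L / real N) N rho u m\<bar>
                 \<le> C * (L / real N) powr ((2 * gam - 3) / (2 * gam)))"
proof -
  have g: "1 < gam" using assms(5) by simp
  from assms(10) obtain B0 where B0: "\<forall>x\<in>{0..L}. \<bar>u0 x\<bar> \<le> B0" by blast
  define I where "I = (LBINT x = 0..L. \<bar>rho0 x\<bar> powr gam)"
  define E where "E = B0^2 / 2 * (L + I) + a / (gam - 1) * I + 1"
  have "0 \<le> I" unfolding I_def using assms(1) by (intro interval_integral_abs_powr_nonneg) simp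
  hence E: "0 < E" unfolding E_def using assms(1,4) g by (intro add_nonneg_pos add_nonneg_nonneg) auto
  have E_bound: "B0^2 / 2 * (L + I) + a / (gam - 1) * I \<le> E" unfolding E_def by simp
  show ?thesis
  proof (intro exI[of _ "E1_constant L mu gam E ((gam - 1) * E / a)"] conjI allI impI ballI)
    show "0 < E1_constant L mu gam E ((gam - 1) * E / a)"
      using assms(1,3,4) g E by (intro E1_constant_pos) auto
  next
    fix N M rho u m
    assume "1 \<le> N \<and> 1 \<le> M \<and> L / real N = T / real M \<and> L / real N < 1
      \<and> numsol L T mu a gam rho0 u0 N M rho u" and m: "m \<in> {1..M}"
    hence "1 \<le> N" "T / real M = L / real N" "L / real N < 1" "numsol L T mu a gam rho0 u0 N M rho u"
      by auto
    from numsol_E1_abs_le[OF assms(1) g assms(6,4,3,7-9) B0 E_bound[unfolded I_def] E this m]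
    show "\<bar>E1 (T / real M) (L / real N) N rho u m\<bar>
        \<le> E1_constant L mu gam E ((gam - 1) * E / a) * (L / real N) powr ((2 * gam - 3) / (2 * gam))" .
  qed
qed

end
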